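(* Let $f:\mathbb R^p\to\mathbb R$ be differentiable with Lipschitz gradient and $m$-strongly convex ($m\geqslant0$). Let $X,Y$ be square-integrable $p$-dimensional random vectors and $(W_t)_{t\geqslant0}$ a $p$-dimensional Brownian motion independent of $Y$. Set $X_t=X+\sqrt2\,W_t$ and let $(L_t)_{t\geqslant0}$ solve $dL_t=-\nabla f(L_t)\,dt+\sqrt2\,dW_t$, $L_0=Y$. For $h\geqslant0$ set $\psi(h)=\|X_h-L_h\|_2^2+m\int_0^h\|X_h-L_s\|_2^2\,ds$. Then $$\psi(h)\leqslant\|X-L_0\|_2^2+\int_0^h2\big(f(X_s)-f(L_s)\big)\,ds+R_1(h),$$ $$\psi(h)\leqslant\|X-L_0\|_2^2+2h\big(f(X_h)-f(L_h)\big)+R_2(h),$$ where $$R_1(h)=m\int_0^h\big\{\|X_h-L_s\|_2^2-\|X_s-L_s\|_2^2\big\}ds,\qquad R_2(h)=2\int_0^h\big\{f(L_h)-f(L_s)-\sqrt2(W_h-W_s)^\top\nabla f(L_s)\big\}ds .$$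
   Context: $m$-strong convexity means $f(\theta')\geqslant f(\theta)+\nabla f(\theta)^\top(\theta'-\theta)+\frac m2\|\theta'-\theta\|_2^2$ for all $\theta,\theta'$. The inequalities hold pointwise (almost surely). *)

theory Defs
  imports "HOL-Analysis.Analysis" "HOL-Probability.Probability"
begin

definition brownian_motion :: "'a measure \<Rightarrow> (real \<Rightarrow> 'a \<Rightarrow> real^'p) \<Rightarrow> bool" where
  "brownian_motion M W \<longleftrightarrow>
     prob_space M \<and>
     (\<forall>t\<ge>0. W t \<in> borel_measurable M) \<and>
     (AE \<omega> in M. W 0 \<omega> = 0 \<and> continuous_on {0..} (\<lambda>t. W t \<omega>)) \<and>
     (\<forall>(n::nat) (t::nat \<Rightarrow> real). 0 \<le> t 0 \<and> incseq t \<longrightarrow>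
        prob_space.indep_vars M (\<lambda>_. borel) (\<lambda>i \<omega>. W (t (Suc i)) \<omega> - W (t i) \<omega>) {..<n}) \<and>
     (\<forall>s t. 0 \<le> s \<and> s < t \<longrightarrow>
        prob_space.indep_vars M (\<lambda>_. borel) (\<lambda>i \<omega>. (W t \<omega> - W s \<omega>) $ i) UNIV \<and>
        (\<forall>i. distributed M lborel (\<lambda>\<omega>. (W t \<omega> - W s \<omega>) $ i)
                (\<lambda>x. ennreal (normal_density 0 (sqrt (t - s)) x))))"

definition rv_events :: "'a measure \<Rightarrow> ('a \<Rightarrow> 'b::topological_space) \<Rightarrow> 'a set set" where
  "rv_events M Z = {Z -` A \<inter> space M | A. A \<in> sets borel}"

definition process_events :: "'a measure \<Rightarrow> (real \<Rightarrow> 'a \<Rightarrow> 'b::topological_space) \<Rightarrow> real set \<Rightarrow> 'a set set" where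
  "process_events M W T = (\<Union>t\<in>T. rv_events M (W t))"

end

theory Submission
  imports Defs
begin

text \<open>The inequalities hold path by path. Along a path, the gap \<open>D\<^sub>t = X\<^sub>t - L\<^sub>t\<close> has no
  Brownian part, since both processes are driven by the same noise \<open>\<surd>2 W\<close>: it satisfies
  \<open>D\<^sub>t = D\<^sub>0 + \<integral>\<^sub>0\<^sup>t \<nabla>f(L\<^sub>s) ds\<close>, so \<open>\<parallel>D\<^sub>h\<parallel>\<^sup>2 - \<parallel>D\<^sub>0\<parallel>\<^sup>2 = \<integral>\<^sub>0\<^sup>h 2 D\<^sub>s\<^sup>T\<nabla>f(L\<^sub>s) ds\<close>.
  Strong convexity bounds the integrand above, tested at \<open>X\<^sub>s\<close> for the first inequality and at
  \<open>X\<^sub>h = X\<^sub>s + \<surd>2(W\<^sub>h - W\<^sub>s)\<close> for the second.\<close>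

lemma norm_sq_integral_has_integral:
  fixes g :: "real \<Rightarrow> 'a::euclidean_space"
  assumes g: "continuous_on {0..h} g" and "h \<ge> 0"
  shows "((\<lambda>t. 2 * ((c + integral {0..t} g) \<bullet> g t)) has_integral
           (norm (c + integral {0..h} g))\<^sup>2 - (norm c)\<^sup>2) {0..h}"
proof -
  define D where "D t = c + integral {0..t} g" for t
  have "((\<lambda>t. D t \<bullet> D t) has_vector_derivative 2 * (D t \<bullet> g t)) (at t within {0..h})"
    if "t \<in> {0..h}" for t
  proof -
    have "(D has_vector_derivative g t) (at t within {0..h})"
      unfolding D_def using integral_has_vector_derivative[OF g that]
      by (auto intro!: derivative_eq_intros)
    from bounded_bilinear.has_vector_derivative[OF bounded_bilinear_inner this this]
    show ?thesis by (simp add: inner_commute)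
  qed
  from fundamental_theorem_of_calculus[OF \<open>h \<ge> 0\<close> this]
  show ?thesis by (simp add: D_def power2_norm_eq_inner)
qed

locale langevin_path =
  fixes f :: "'a::euclidean_space \<Rightarrow> real" and grad :: "'a \<Rightarrow> 'a" and m :: real
    and x y :: 'a and w l :: "real \<Rightarrow> 'a"
  assumes continuous_f: "continuous_on UNIV f"
    and continuous_grad: "continuous_on UNIV grad"
    and strong_convex: "\<forall>\<theta> \<theta>'. f \<theta>' \<ge> f \<theta> + grad \<theta> \<bullet> (\<theta>' - \<theta>) + m / 2 * (norm (\<theta>' - \<theta>))\<^sup>2"
    and continuous_w: "continuous_on {0..} w" and w_0: "w 0 = 0"
    and continuous_l: "continuous_on {0..} l"
    and l_eq: "\<forall>t\<ge>0. l t = y - integral {0..t} (\<lambda>s. grad (l s)) + sqrt 2 *\<^sub>R w t"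
begin

lemma inner_grad_le: "2 * ((a - b) \<bullet> grad b) \<le> 2 * (f a - f b) - m * (norm (a - b))\<^sup>2"
  using strong_convex[rule_format, of b a] by (simp add: inner_commute)

lemma continuous_on_paths:
  shows "continuous_on {0..h} w" and "continuous_on {0..h} l"
    and "continuous_on {0..h} (\<lambda>s. grad (l s))" and "continuous_on {0..h} (\<lambda>s. f (l s))"
    and "continuous_on {0..h} (\<lambda>s. f (x + sqrt 2 *\<^sub>R w s))"
proof -
  have sub: "{0..h} \<subseteq> {0::real..}" by auto
  show w: "continuous_on {0..h} w" and l: "continuous_on {0..h} l"
    using continuous_on_subset[OF continuous_w sub] continuous_on_subset[OF continuous_l sub] .
  show "continuous_on {0..h} (\<lambda>s. grad (l s))" "continuous_on {0..h} (\<lambda>s. f (l s))"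
    using continuous_on_compose2[OF continuous_grad l] continuous_on_compose2[OF continuous_f l]
    by auto
  show "continuous_on {0..h} (\<lambda>s. f (x + sqrt 2 *\<^sub>R w s))"
    by (rule continuous_on_compose2[OF continuous_f]) (auto intro!: continuous_intros w)
qed

lemma gap_norm_sq_has_integral:
  assumes "h \<ge> 0"
  shows "((\<lambda>s. 2 * ((x + sqrt 2 *\<^sub>R w s - l s) \<bullet> grad (l s))) has_integral
           (norm (x + sqrt 2 *\<^sub>R w h - l h))\<^sup>2 - (norm (x - l 0))\<^sup>2) {0..h}"
proof -
  have gap: "x + sqrt 2 *\<^sub>R w t - l t = (x - y) + integral {0..t} (\<lambda>s. grad (l s))"
    if "t \<ge> 0" for t
    using l_eq that by simp
  have "x - l 0 = x - y"
    using gap[of 0] w_0 by simp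
  with norm_sq_integral_has_integral[OF continuous_on_paths(3) assms, of "x - y"]
  show ?thesis
    using has_integral_cong[of "{0..h}" "\<lambda>s. 2 * ((x + sqrt 2 *\<^sub>R w s - l s) \<bullet> grad (l s))"]
    by (simp add: gap assms)
qed

lemma psi_le_R1:
  assumes "h \<ge> 0"
  shows "(norm ((x + sqrt 2 *\<^sub>R w h) - l h))\<^sup>2
           + m * integral {0..h} (\<lambda>s. (norm ((x + sqrt 2 *\<^sub>R w h) - l s))\<^sup>2)
         \<le> (norm (x - l 0))\<^sup>2
           + integral {0..h} (\<lambda>s. 2 * (f (x + sqrt 2 *\<^sub>R w s) - f (l s)))
           + m * integral {0..h}
               (\<lambda>s. (norm ((x + sqrt 2 *\<^sub>R w h) - l s))\<^sup>2 - (norm ((x + sqrt 2 *\<^sub>R w s) - l s))\<^sup>2)"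
    (is "?Nh + m * integral _ ?A \<le> ?N0 + integral _ ?F + m * integral _ (\<lambda>s. ?A s - ?B s)")
proof -
  note cont = continuous_on_paths[of h]
  have iF: "?F integrable_on {0..h}"
    using cont by (intro integrable_continuous_interval) (auto intro!: continuous_intros)
  have iA: "?A integrable_on {0..h}" and iB: "?B integrable_on {0..h}"
    using cont by (auto intro!: integrable_continuous_interval continuous_intros)
  have "((\<lambda>s. ?F s - m * ?B s) has_integral integral {0..h} ?F - m * integral {0..h} ?B) {0..h}"
    using iF iB by (intro has_integral_diff has_integral_mult_right integrable_integral)
  then have "?Nh - ?N0 \<le> integral {0..h} ?F - m * integral {0..h} ?B"
    by (rule has_integral_le[OF gap_norm_sq_has_integral[OF assms]])
       (use inner_grad_le in simp)
  moreover have "integral {0..h} (\<lambda>s. ?A s - ?B s) = integral {0..h} ?A - integral {0..h} ?B"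
    using iA iB by (rule integral_diff)
  ultimately show ?thesis
    by (simp add: right_diff_distrib)
qed

lemma psi_le_R2:
  assumes "h \<ge> 0"
  shows "(norm ((x + sqrt 2 *\<^sub>R w h) - l h))\<^sup>2
           + m * integral {0..h} (\<lambda>s. (norm ((x + sqrt 2 *\<^sub>R w h) - l s))\<^sup>2)
         \<le> (norm (x - l 0))\<^sup>2 + 2 * h * (f (x + sqrt 2 *\<^sub>R w h) - f (l h))
           + 2 * integral {0..h}
               (\<lambda>s. f (l h) - f (l s) - sqrt 2 * ((w h - w s) \<bullet> grad (l s)))"
    (is "?Nh + m * integral _ ?A \<le> ?N0 + 2 * h * ?c + 2 * integral _ ?F")
proof -
  note cont = continuous_on_paths[of h]
  have iF: "?F integrable_on {0..h}"
    using cont by (intro integrable_continuous_interval) (auto intro!: continuous_intros)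
  have iA: "?A integrable_on {0..h}"
    using cont by (auto intro!: integrable_continuous_interval continuous_intros)
  have "((\<lambda>s. 2 * ?F s + 2 * ?c - m * ?A s) has_integral
          2 * integral {0..h} ?F + h * (2 * ?c) - m * integral {0..h} ?A) {0..h}"
    using iF iA assms
    by (intro has_integral_diff has_integral_add has_integral_mult_right integrable_integral)
       (use has_integral_const_real[of "2 * ?c" 0 h] in simp_all)
  moreover have "2 * ((x + sqrt 2 *\<^sub>R w s - l s) \<bullet> grad (l s)) \<le> 2 * ?F s + 2 * ?c - m * ?A s"
    for s
  proof -
    have "x + sqrt 2 *\<^sub>R w s - l s = (x + sqrt 2 *\<^sub>R w h - l s) - sqrt 2 *\<^sub>R (w h - w s)"
      by (simp add: algebra_simps)
    then have "(x + sqrt 2 *\<^sub>R w s - l s) \<bullet> grad (l s)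
               = (x + sqrt 2 *\<^sub>R w h - l s) \<bullet> grad (l s) - sqrt 2 * ((w h - w s) \<bullet> grad (l s))"
      by (simp only: inner_diff_left inner_scaleR_left)
    with inner_grad_le[of "x + sqrt 2 *\<^sub>R w h" "l s"] show ?thesis
      by simp
  qed
  ultimately have "?Nh - ?N0 \<le> 2 * integral {0..h} ?F + h * (2 * ?c) - m * integral {0..h} ?A"
    by (intro has_integral_le[OF gap_norm_sq_has_integral[OF assms]])
  then show ?thesis
    by (simp add: algebra_simps)
qed

end

theorem lemma4:
  fixes M :: "'a measure" and f :: "real^'p \<Rightarrow> real" and grad :: "real^'p \<Rightarrow> real^'p"
    and m :: real and X Y :: "'a \<Rightarrow> real^'p" and W L :: "real \<Rightarrow> 'a \<Rightarrow> real^'p"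
  assumes prob: "prob_space M"
    and deriv: "\<forall>x. (f has_derivative (\<lambda>v. grad x \<bullet> v)) (at x)"
    and lip: "\<exists>C. C-lipschitz_on UNIV grad"
    and m_nonneg: "m \<ge> 0"
    and strong_convex: "\<forall>\<theta> \<theta>'. f \<theta>' \<ge> f \<theta> + grad \<theta> \<bullet> (\<theta>' - \<theta>) + m / 2 * (norm (\<theta>' - \<theta>))\<^sup>2"
    and X_rv: "X \<in> borel_measurable M" and X_L2: "integrable M (\<lambda>\<omega>. (norm (X \<omega>))\<^sup>2)"
    and Y_rv: "Y \<in> borel_measurable M" and Y_L2: "integrable M (\<lambda>\<omega>. (norm (Y \<omega>))\<^sup>2)"
    and BM: "brownian_motion M W"
    and indep: "prob_space.indep_set M (sigma_sets (space M) (rv_events M Y))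
                  (sigma_sets (space M) (process_events M W {0..}))"
    and L_adapted: "\<forall>t\<ge>0. L t \<in> measurable
                  (sigma (space M) (rv_events M Y \<union> process_events M W {0..t})) borel"
    and L_sde: "AE \<omega> in M. continuous_on {0..} (\<lambda>t. L t \<omega>) \<and>
                  (\<forall>t\<ge>0. L t \<omega> = Y \<omega> - integral {0..t} (\<lambda>s. grad (L s \<omega>)) + sqrt 2 *\<^sub>R W t \<omega>)"
  defines "\<psi> \<equiv> (\<lambda>h \<omega>. (norm ((X \<omega> + sqrt 2 *\<^sub>R W h \<omega>) - L h \<omega>))\<^sup>2
                     + m * integral {0..h} (\<lambda>s. (norm ((X \<omega> + sqrt 2 *\<^sub>R W h \<omega>) - L s \<omega>))\<^sup>2))"
    and "R1 \<equiv> (\<lambda>h \<omega>. m * integral {0..h}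
                     (\<lambda>s. (norm ((X \<omega> + sqrt 2 *\<^sub>R W h \<omega>) - L s \<omega>))\<^sup>2 - (norm ((X \<omega> + sqrt 2 *\<^sub>R W s \<omega>) - L s \<omega>))\<^sup>2))"
    and "R2 \<equiv> (\<lambda>h \<omega>. 2 * integral {0..h}
                     (\<lambda>s. f (L h \<omega>) - f (L s \<omega>) - sqrt 2 * ((W h \<omega> - W s \<omega>) \<bullet> grad (L s \<omega>))))"
  shows "\<forall>h\<ge>0. AE \<omega> in M.
           \<psi> h \<omega> \<le> (norm (X \<omega> - L 0 \<omega>))\<^sup>2
                     + integral {0..h} (\<lambda>s. 2 * (f ((X \<omega> + sqrt 2 *\<^sub>R W s \<omega>)) - f (L s \<omega>))) + R1 h \<omega>
         \<and> \<psi> h \<omega> \<le> (norm (X \<omega> - L 0 \<omega>))\<^sup>2 + 2 * h * (f ((X \<omega> + sqrt 2 *\<^sub>R W h \<omega>)) - f (L h \<omega>)) + R2 h \<omega>"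
proof -
  obtain C where "C-lipschitz_on UNIV grad"
    using lip by blast
  then have continuous_grad: "continuous_on UNIV grad"
    by (rule lipschitz_on_continuous_on)
  have continuous_f: "continuous_on UNIV f"
    using deriv by (meson continuous_at_imp_continuous_on has_derivative_continuous)
  have W_paths: "AE \<omega> in M. W 0 \<omega> = 0 \<and> continuous_on {0..} (\<lambda>t. W t \<omega>)"
    using BM unfolding brownian_motion_def by blast
  show ?thesis
  proof (intro allI impI, goal_cases)
    case (1 h)
    from W_paths L_sde show ?case
    proof eventually_elim
      case (elim \<omega>)
      then interpret langevin_path f grad m "X \<omega>" "Y \<omega>" "\<lambda>t. W t \<omega>" "\<lambda>t. L t \<omega>"
        using continuous_f continuous_grad strong_convex by unfold_locales auto
      show ?case
        unfolding \<psi>_def R1_def R2_def using psi_le_R1[OF 1] psi_le_R2[OF 1] by simp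
    qed
  qed
qed

end
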